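(* For all terms $t,s$ of the distributive $\lambda$-calculus, if $t\to_{\mathsf{dist}}^* s$ and $s$ is a $\to_{\mathsf{dist}}$-normal form, then $t\to_{LO}^* s$.
   Context: Terms of the distributive $\lambda$-calculus are given by the grammar $t,s,u ::= x \mid \lambda x.t \mid ts \mid \langle t,s\rangle \mid \pi_1 t \mid \pi_2 t$, considered up to $\alpha$-renaming; $t\{x:=s\}$ denotes capture-avoiding substitution. The top-level rules are: $(\lambda x.t)s \mapsto_\beta t\{x:=s\}$; $\pi_i\langle t_1,t_2\rangle \mapsto_{\pi_i} t_i$ for $i=1,2$; $\langle t,s\rangle u \mapsto_{@_\times} \langle tu, su\rangle$; $\pi_i(\lambda x.t)\mapsto_{\pi_\lambda} \lambda x.\pi_i t$ for $i=1,2$. The relation $\to_{\mathsf{dist}}$ is the closure of the union of these rules under all term constructors; $\to^*$ denotes reflexive-transitive closure; a normal form is a term with no $\to_{\mathsf{dist}}$-reduct. A term is neutral if it is a variable, an application $ts$, or a projection $\pi_i t$. Leftmost-outermost reduction $\to_{LO}$ is the smallest relation closed under the rules: $(\lambda x.t)s\to_{LO} t\{x:=s\}$; $\pi_i\langle t_1,t_2\rangle\to_{LO} t_i$ ($i=1,2$); $\langle t,s\rangle u\to_{LO}\langle tu,su\rangle$; $\pi_i(\lambda x.t)\to_{LO}\lambda x.\pi_i t$ ($i=1,2$); if $t\to_{LO}s$ and $t$ is neutral then $tu\to_{LO}su$; if $t\to_{LO}s$ then $\lambda x.t\to_{LO}\lambda x.s$; if $u$ is neutral and normal and $t\to_{LO}s$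 then $ut\to_{LO}us$; if $t\to_{LO}s$ then $\pi_i t\to_{LO}\pi_i s$; if $t\to_{LO}s$ then $\langle t,u\rangle\to_{LO}\langle s,u\rangle$; if $u$ is normal and $t\to_{LO}s$ then $\langle u,t\rangle\to_{LO}\langle u,s\rangle$. *)

theory Defs
  imports Main
begin

text \<open>Terms of the distributive lambda-calculus, up to alpha-renaming,
represented with de Bruijn indices.\<close>

datatype dterm =
    Var nat
  | Lam dterm
  | App dterm dterm
  | Pair dterm dterm
  | Prj1 dterm
  | Prj2 dterm

primrec lift :: "dterm \<Rightarrow> nat \<Rightarrow> dterm" where
  "lift (Var i) k = (if i < k then Var i else Var (Suc i))"
| "lift (Lam t) k = Lam (lift t (Suc k))"
| "lift (App t s) k = App (lift t k) (lift s k)"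
| "lift (Pair t s) k = Pair (lift t k) (lift s k)"
| "lift (Prj1 t) k = Prj1 (lift t k)"
| "lift (Prj2 t) k = Prj2 (lift t k)"

primrec subst :: "dterm \<Rightarrow> nat \<Rightarrow> dterm \<Rightarrow> dterm" where
  "subst (Var i) k s = (if k < i then Var (i - 1) else if i = k then s else Var i)"
| "subst (Lam t) k s = Lam (subst t (Suc k) (lift s 0))"
| "subst (App t u) k s = App (subst t k s) (subst u k s)"
| "subst (Pair t u) k s = Pair (subst t k s) (subst u k s)"
| "subst (Prj1 t) k s = Prj1 (subst t k s)"
| "subst (Prj2 t) k s = Prj2 (subst t k s)"

inductive dist :: "dterm \<Rightarrow> dterm \<Rightarrow> bool" where
  beta: "dist (App (Lam t) s) (subst t 0 s)"
| pi1: "dist (Prj1 (Pair t1 t2)) t1"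
| pi2: "dist (Prj2 (Pair t1 t2)) t2"
| app_pair: "dist (App (Pair t s) u) (Pair (App t u) (App s u))"
| pi1_lam: "dist (Prj1 (Lam t)) (Lam (Prj1 t))"
| pi2_lam: "dist (Prj2 (Lam t)) (Lam (Prj2 t))"
| lam: "dist t t' \<Longrightarrow> dist (Lam t) (Lam t')"
| appL: "dist t t' \<Longrightarrow> dist (App t s) (App t' s)"
| appR: "dist s s' \<Longrightarrow> dist (App t s) (App t s')"
| pairL: "dist t t' \<Longrightarrow> dist (Pair t s) (Pair t' s)"
| pairR: "dist s s' \<Longrightarrow> dist (Pair t s) (Pair t s')"
| prj1: "dist t t' \<Longrightarrow> dist (Prj1 t) (Prj1 t')"
| prj2: "dist t t' \<Longrightarrow> dist (Prj2 t) (Prj2 t')"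

definition normal :: "dterm \<Rightarrow> bool" where
  "normal t \<longleftrightarrow> \<not> (\<exists>u. dist t u)"

fun neutral :: "dterm \<Rightarrow> bool" where
  "neutral (Var x) = True"
| "neutral (App t s) = True"
| "neutral (Prj1 t) = True"
| "neutral (Prj2 t) = True"
| "neutral (Lam t) = False"
| "neutral (Pair t s) = False"

inductive lo :: "dterm \<Rightarrow> dterm \<Rightarrow> bool" where
  lo_beta: "lo (App (Lam t) s) (subst t 0 s)"
| lo_pi1: "lo (Prj1 (Pair t1 t2)) t1"
| lo_pi2: "lo (Prj2 (Pair t1 t2)) t2"
| lo_app_pair: "lo (App (Pair t s) u) (Pair (App t u) (App s u))"
| lo_pi1_lam: "lo (Prj1 (Lam t)) (Lam (Prj1 t))"
| lo_pi2_lam: "lo (Prj2 (Lam t)) (Lam (Prj2 t))"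
| lo_appL: "lo t s \<Longrightarrow> neutral t \<Longrightarrow> lo (App t u) (App s u)"
| lo_lam: "lo t s \<Longrightarrow> lo (Lam t) (Lam s)"
| lo_appR: "neutral u \<Longrightarrow> normal u \<Longrightarrow> lo t s \<Longrightarrow> lo (App u t) (App u s)"
| lo_prj1: "lo t s \<Longrightarrow> lo (Prj1 t) (Prj1 s)"
| lo_prj2: "lo t s \<Longrightarrow> lo (Prj2 t) (Prj2 s)"
| lo_pairL: "lo t s \<Longrightarrow> lo (Pair t u) (Pair s u)"
| lo_pairR: "normal u \<Longrightarrow> lo t s \<Longrightarrow> lo (Pair u t) (Pair u s)"

end

theory Submission
  imports Defs
begin

text \<open>Takahashi's standardization argument, adapted to the distributive rules.
A standard reduction of t to s first weak-head reduces t to a term with the same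
outermost constructor as s and then standardly reduces corresponding immediate
subterms. Standard reduction is closed under substitution, which lets it absorb
one more full step at its end: a root redex of s is traced back through the head
reduction, where it becomes one further head step. Hence every reduction is
standard. Towards a normal form a standard reduction is leftmost-outermost: head
steps are LO steps, and a normal application has a neutral normal function part,
so LO may reduce the function part (which stays neutral) and then the argument.\<close>

lemma rtranclp_map:
  assumes "\<And>x y. r x y \<Longrightarrow> r' (f x) (f y)" and "r\<^sup>*\<^sup>* x y"
  shows "r'\<^sup>*\<^sup>* (f x) (f y)"
  using assms(2) by induction (auto intro: rtranclp.rtrancl_into_rtrancl assms(1))

lemma lift_lift: "i < k + 1 \<Longrightarrow> lift (lift t i) (Suc k) = lift (lift t k) i"
  by (induction t arbitrary: i k) auto

lemma lift_subst [simp]: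
  "j < i + 1 \<Longrightarrow> lift (subst t j s) i = subst (lift t (i + 1)) j (lift s i)"
  by (induction t arbitrary: i j s) (simp_all add: diff_Suc lift_lift split: nat.split)

lemma lift_subst_lt:
  "i < j + 1 \<Longrightarrow> lift (subst t j s) i = subst (lift t i) (j + 1) (lift s i)"
  by (induction t arbitrary: i j s) (auto simp add: lift_lift)

lemma subst_lift [simp]: "subst (lift t k) k s = t"
  by (induction t arbitrary: k s) simp_all

lemma subst_subst: "i < j + 1 \<Longrightarrow>
  subst (subst t (Suc j) (lift v i)) i (subst u j v) = subst (subst t i u) j v"
  by (induction t arbitrary: i j u v)
    (simp_all add: diff_Suc lift_lift [symmetric] lift_subst_lt split: nat.split)

inductive head :: "dterm \<Rightarrow> dterm \<Rightarrow> bool" where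
  head_beta: "head (App (Lam t) s) (subst t 0 s)"
| head_pi1: "head (Prj1 (Pair t1 t2)) t1"
| head_pi2: "head (Prj2 (Pair t1 t2)) t2"
| head_app_pair: "head (App (Pair t s) u) (Pair (App t u) (App s u))"
| head_pi1_lam: "head (Prj1 (Lam t)) (Lam (Prj1 t))"
| head_pi2_lam: "head (Prj2 (Lam t)) (Lam (Prj2 t))"
| head_appL: "head t t' \<Longrightarrow> head (App t s) (App t' s)"
| head_prj1: "head t t' \<Longrightarrow> head (Prj1 t) (Prj1 t')"
| head_prj2: "head t t' \<Longrightarrow> head (Prj2 t) (Prj2 t')"

lemma head_lift: "head t t' \<Longrightarrow> head (lift t k) (lift t' k)"
proof (induction t t' arbitrary: k rule: head.induct)
  case (head_beta t s)
  show ?case using head.head_beta[of "lift t (Suc k)" "lift s k"] by simp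
qed (auto intro: head.intros)

lemma head_subst: "head t t' \<Longrightarrow> head (subst t k s) (subst t' k s)"
proof (induction t t' arbitrary: k s rule: head.induct)
  case (head_beta t u)
  show ?case using head.head_beta[of "subst t (Suc k) (lift s 0)" "subst u k s"]
    subst_subst[of 0 k t s u] by simp
qed (auto intro: head.intros)

lemma head_rtranclp_appL: "head\<^sup>*\<^sup>* t t' \<Longrightarrow> head\<^sup>*\<^sup>* (App t s) (App t' s)"
  by (rule rtranclp_map[where f = "\<lambda>t. App t s"]) (rule head_appL)

lemma head_rtranclp_prj1: "head\<^sup>*\<^sup>* t t' \<Longrightarrow> head\<^sup>*\<^sup>* (Prj1 t) (Prj1 t')"
  by (rule rtranclp_map[where f = Prj1]) (rule head_prj1)

lemma head_rtranclp_prj2: "head\<^sup>*\<^sup>* t t' \<Longrightarrow> head\<^sup>*\<^sup>* (Prj2 t) (Prj2 t')"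
  by (rule rtranclp_map[where f = Prj2]) (rule head_prj2)

lemma head_rtranclp_lift: "head\<^sup>*\<^sup>* t t' \<Longrightarrow> head\<^sup>*\<^sup>* (lift t k) (lift t' k)"
  by (rule rtranclp_map[where f = "\<lambda>t. lift t k"]) (rule head_lift)

lemma head_rtranclp_subst: "head\<^sup>*\<^sup>* t t' \<Longrightarrow> head\<^sup>*\<^sup>* (subst t k s) (subst t' k s)"
  by (rule rtranclp_map[where f = "\<lambda>t. subst t k s"]) (rule head_subst)

inductive standard :: "dterm \<Rightarrow> dterm \<Rightarrow> bool" where
  standard_Var: "head\<^sup>*\<^sup>* t (Var x) \<Longrightarrow> standard t (Var x)"
| standard_Lam: "head\<^sup>*\<^sup>* t (Lam u) \<Longrightarrow> standard u s \<Longrightarrow> standard t (Lam s)"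
| standard_App: "head\<^sup>*\<^sup>* t (App u1 u2) \<Longrightarrow> standard u1 s1 \<Longrightarrow> standard u2 s2 \<Longrightarrow>
    standard t (App s1 s2)"
| standard_Pair: "head\<^sup>*\<^sup>* t (Pair u1 u2) \<Longrightarrow> standard u1 s1 \<Longrightarrow> standard u2 s2 \<Longrightarrow>
    standard t (Pair s1 s2)"
| standard_Prj1: "head\<^sup>*\<^sup>* t (Prj1 u) \<Longrightarrow> standard u s \<Longrightarrow> standard t (Prj1 s)"
| standard_Prj2: "head\<^sup>*\<^sup>* t (Prj2 u) \<Longrightarrow> standard u s \<Longrightarrow> standard t (Prj2 s)"

inductive_cases standard_LamE: "standard t (Lam s)"
inductive_cases standard_PairE: "standard t (Pair s1 s2)"

lemma standard_refl: "standard t t"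
  by (induction t) (auto intro: standard.intros)

lemma head_rtranclp_standard_trans: "head\<^sup>*\<^sup>* t u \<Longrightarrow> standard u s \<Longrightarrow> standard t s"
  by (erule standard.cases) (auto intro: standard.intros rtranclp_trans)

lemmas standard_congI = standard.intros[OF rtranclp.rtrancl_refl]

lemma standard_lift: "standard t t' \<Longrightarrow> standard (lift t k) (lift t' k)"
  by (induction t t' arbitrary: k rule: standard.induct)
    (rule head_rtranclp_standard_trans[OF head_rtranclp_lift], assumption,
      force intro: standard_congI standard_refl)+

lemma standard_subst:
  "standard t t' \<Longrightarrow> standard s s' \<Longrightarrow> standard (subst t k s) (subst t' k s')"
proof (induction t t' arbitrary: k s s' rule: standard.induct)
  case (standard_Lam t u r)
  from standard_Lam.prems have "standard (lift s 0) (lift s' 0)"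
    by (rule standard_lift)
  then have "standard (subst (Lam u) k s) (subst (Lam r) k s')"
    by (simp add: standard_Lam.IH standard_congI)
  with head_rtranclp_subst[OF standard_Lam.hyps(1)] show ?case
    by (rule head_rtranclp_standard_trans)
qed (rule head_rtranclp_standard_trans[OF head_rtranclp_subst], assumption,
    force intro: standard_congI)+

lemma standard_beta:
  assumes "standard u (Lam b)" and "standard v s"
  shows "standard (App u v) (subst b 0 s)"
proof -
  from assms(1) obtain w where w: "head\<^sup>*\<^sup>* u (Lam w)" "standard w b"
    by (rule standard_LamE)
  have "head\<^sup>*\<^sup>* (App u v) (subst w 0 v)"
    using head_rtranclp_appL[OF w(1)] head_beta by (rule rtranclp.rtrancl_into_rtrancl)
  moreover have "standard (subst w 0 v) (subst b 0 s)"
    using w(2) assms(2) by (rule standard_subst)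
  ultimately show ?thesis by (rule head_rtranclp_standard_trans)
qed

lemma standard_app_pair:
  assumes "standard u (Pair a b)" and "standard v s"
  shows "standard (App u v) (Pair (App a s) (App b s))"
proof -
  from assms(1) obtain w1 w2
    where w: "head\<^sup>*\<^sup>* u (Pair w1 w2)" "standard w1 a" "standard w2 b"
    by (rule standard_PairE)
  have "head\<^sup>*\<^sup>* (App u v) (Pair (App w1 v) (App w2 v))"
    using head_rtranclp_appL[OF w(1)] head_app_pair by (rule rtranclp.rtrancl_into_rtrancl)
  moreover have "standard (Pair (App w1 v) (App w2 v)) (Pair (App a s) (App b s))"
    using w(2,3) assms(2) by (intro standard_congI)
  ultimately show ?thesis by (rule head_rtranclp_standard_trans)
qed

lemma standard_pi1:
  assumes "standard u (Pair a b)"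
  shows "standard (Prj1 u) a"
proof -
  from assms obtain w1 w2 where w: "head\<^sup>*\<^sup>* u (Pair w1 w2)" "standard w1 a"
    by (rule standard_PairE)
  have "head\<^sup>*\<^sup>* (Prj1 u) w1"
    using head_rtranclp_prj1[OF w(1)] head_pi1 by (rule rtranclp.rtrancl_into_rtrancl)
  then show ?thesis using w(2) by (rule head_rtranclp_standard_trans)
qed

lemma standard_pi2:
  assumes "standard u (Pair a b)"
  shows "standard (Prj2 u) b"
proof -
  from assms obtain w1 w2 where w: "head\<^sup>*\<^sup>* u (Pair w1 w2)" "standard w2 b"
    by (rule standard_PairE)
  have "head\<^sup>*\<^sup>* (Prj2 u) w2"
    using head_rtranclp_prj2[OF w(1)] head_pi2 by (rule rtranclp.rtrancl_into_rtrancl)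
  then show ?thesis using w(2) by (rule head_rtranclp_standard_trans)
qed

lemma standard_pi1_lam:
  assumes "standard u (Lam b)"
  shows "standard (Prj1 u) (Lam (Prj1 b))"
proof -
  from assms obtain w where w: "head\<^sup>*\<^sup>* u (Lam w)" "standard w b"
    by (rule standard_LamE)
  have "head\<^sup>*\<^sup>* (Prj1 u) (Lam (Prj1 w))"
    using head_rtranclp_prj1[OF w(1)] head_pi1_lam by (rule rtranclp.rtrancl_into_rtrancl)
  moreover have "standard (Lam (Prj1 w)) (Lam (Prj1 b))"
    using w(2) by (intro standard_congI)
  ultimately show ?thesis by (rule head_rtranclp_standard_trans)
qed

lemma standard_pi2_lam:
  assumes "standard u (Lam b)"
  shows "standard (Prj2 u) (Lam (Prj2 b))"
proof -
  from assms obtain w where w: "head\<^sup>*\<^sup>* u (Lam w)" "standard w b"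
    by (rule standard_LamE)
  have "head\<^sup>*\<^sup>* (Prj2 u) (Lam (Prj2 w))"
    using head_rtranclp_prj2[OF w(1)] head_pi2_lam by (rule rtranclp.rtrancl_into_rtrancl)
  moreover have "standard (Lam (Prj2 w)) (Lam (Prj2 b))"
    using w(2) by (intro standard_congI)
  ultimately show ?thesis by (rule head_rtranclp_standard_trans)
qed

lemma standard_dist_trans: "standard t s \<Longrightarrow> dist s s' \<Longrightarrow> standard t s'"
  by (induction t s arbitrary: s' rule: standard.induct)
    (erule dist.cases; auto intro: standard.intros
      head_rtranclp_standard_trans[OF _ standard_beta]
      head_rtranclp_standard_trans[OF _ standard_app_pair]
      head_rtranclp_standard_trans[OF _ standard_pi1]
      head_rtranclp_standard_trans[OF _ standard_pi2]
      head_rtranclp_standard_trans[OF _ standard_pi1_lam]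
      head_rtranclp_standard_trans[OF _ standard_pi2_lam])+

lemma dist_rtranclp_standard: "dist\<^sup>*\<^sup>* t s \<Longrightarrow> standard t s"
  by (induction rule: rtranclp_induct) (auto intro: standard_refl standard_dist_trans)

lemma head_neutral: "head t t' \<Longrightarrow> neutral t"
  by (cases rule: head.cases) auto

lemma head_lo: "head t t' \<Longrightarrow> lo t t'"
  by (induction rule: head.induct) (auto intro: lo.intros head_neutral)

lemma head_rtranclp_lo_rtranclp: "head\<^sup>*\<^sup>* t t' \<Longrightarrow> lo\<^sup>*\<^sup>* t t'"
  using mono_rtranclp[of head lo] head_lo by blast

lemma lo_rtranclp_reflects_neutral: "lo\<^sup>*\<^sup>* t t' \<Longrightarrow> neutral t' \<Longrightarrow> neutral t"
proof (induction rule: converse_rtranclp_induct)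
  case (step t r)
  from step.hyps(1) step.IH[OF step.prems] show ?case
    by (cases rule: lo.cases) auto
qed

lemma lo_rtranclp_lam: "lo\<^sup>*\<^sup>* t t' \<Longrightarrow> lo\<^sup>*\<^sup>* (Lam t) (Lam t')"
  by (rule rtranclp_map[where f = Lam]) (rule lo_lam)

lemma lo_rtranclp_prj1: "lo\<^sup>*\<^sup>* t t' \<Longrightarrow> lo\<^sup>*\<^sup>* (Prj1 t) (Prj1 t')"
  by (rule rtranclp_map[where f = Prj1]) (rule lo_prj1)

lemma lo_rtranclp_prj2: "lo\<^sup>*\<^sup>* t t' \<Longrightarrow> lo\<^sup>*\<^sup>* (Prj2 t) (Prj2 t')"
  by (rule rtranclp_map[where f = Prj2]) (rule lo_prj2)

lemma lo_rtranclp_pairL: "lo\<^sup>*\<^sup>* t t' \<Longrightarrow> lo\<^sup>*\<^sup>* (Pair t u) (Pair t' u)"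
  by (rule rtranclp_map[where f = "\<lambda>t. Pair t u"]) (rule lo_pairL)

lemma lo_rtranclp_pairR: "normal u \<Longrightarrow> lo\<^sup>*\<^sup>* t t' \<Longrightarrow> lo\<^sup>*\<^sup>* (Pair u t) (Pair u t')"
  by (rule rtranclp_map[where f = "Pair u"]) (rule lo_pairR)

lemma lo_rtranclp_appR:
  "neutral u \<Longrightarrow> normal u \<Longrightarrow> lo\<^sup>*\<^sup>* t t' \<Longrightarrow> lo\<^sup>*\<^sup>* (App u t) (App u t')"
  by (rule rtranclp_map[where f = "App u"]) (rule lo_appR)

lemma lo_rtranclp_appL:
  "lo\<^sup>*\<^sup>* t t' \<Longrightarrow> neutral t' \<Longrightarrow> lo\<^sup>*\<^sup>* (App t u) (App t' u)"
proof (induction rule: converse_rtranclp_induct)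
  case (step t r)
  have "neutral t"
    using converse_rtranclp_into_rtranclp[OF step.hyps] step.prems
    by (rule lo_rtranclp_reflects_neutral)
  with step.hyps(1) have "lo (App t u) (App r u)"
    by (rule lo_appL)
  then show ?case
    using step.IH[OF step.prems] by (rule converse_rtranclp_into_rtranclp)
qed simp

lemma normal_LamD: "normal (Lam t) \<Longrightarrow> normal t"
  unfolding normal_def by (auto intro: dist.intros)

lemma normal_Prj1D: "normal (Prj1 t) \<Longrightarrow> normal t"
  unfolding normal_def by (auto intro: dist.intros)

lemma normal_Prj2D: "normal (Prj2 t) \<Longrightarrow> normal t"
  unfolding normal_def by (auto intro: dist.intros)

lemma normal_PairD: "normal (Pair t s) \<Longrightarrow> normal t \<and> normal s"
  unfolding normal_def by (auto intro: dist.intros)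

lemma normal_AppD: "normal (App t s) \<Longrightarrow> neutral t \<and> normal t \<and> normal s"
  unfolding normal_def by (cases t) (auto intro: dist.intros)

lemma standard_normal_lo_rtranclp: "standard t s \<Longrightarrow> normal s \<Longrightarrow> lo\<^sup>*\<^sup>* t s"
proof (induction rule: standard.induct)
  case (standard_Var t x)
  then show ?case by (blast intro: head_rtranclp_lo_rtranclp)
next
  case (standard_Lam t u s)
  then have "lo\<^sup>*\<^sup>* (Lam u) (Lam s)"
    by (blast intro: lo_rtranclp_lam dest: normal_LamD)
  with head_rtranclp_lo_rtranclp[OF standard_Lam.hyps(1)] show ?case
    by (rule rtranclp_trans)
next
  case (standard_App t u1 u2 s1 s2)
  then have "lo\<^sup>*\<^sup>* (App u1 u2) (App s1 u2)" and "lo\<^sup>*\<^sup>* (App s1 u2) (App s1 s2)"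
    by (auto intro: lo_rtranclp_appL lo_rtranclp_appR dest: normal_AppD)
  with head_rtranclp_lo_rtranclp[OF standard_App.hyps(1)] show ?case
    by (blast intro: rtranclp_trans)
next
  case (standard_Pair t u1 u2 s1 s2)
  then have "lo\<^sup>*\<^sup>* (Pair u1 u2) (Pair s1 u2)" and "lo\<^sup>*\<^sup>* (Pair s1 u2) (Pair s1 s2)"
    by (auto intro: lo_rtranclp_pairL lo_rtranclp_pairR dest: normal_PairD)
  with head_rtranclp_lo_rtranclp[OF standard_Pair.hyps(1)] show ?case
    by (blast intro: rtranclp_trans)
next
  case (standard_Prj1 t u s)
  then have "lo\<^sup>*\<^sup>* (Prj1 u) (Prj1 s)"
    by (blast intro: lo_rtranclp_prj1 dest: normal_Prj1D)
  with head_rtranclp_lo_rtranclp[OF standard_Prj1.hyps(1)] show ?case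
    by (rule rtranclp_trans)
next
  case (standard_Prj2 t u s)
  then have "lo\<^sup>*\<^sup>* (Prj2 u) (Prj2 s)"
    by (blast intro: lo_rtranclp_prj2 dest: normal_Prj2D)
  with head_rtranclp_lo_rtranclp[OF standard_Prj2.hyps(1)] show ?case
    by (rule rtranclp_trans)
qed

theorem theorem2:
  fixes t s :: dterm
  assumes "dist\<^sup>*\<^sup>* t s" and "normal s"
  shows "lo\<^sup>*\<^sup>* t s"
  using dist_rtranclp_standard[OF assms(1)] assms(2) by (rule standard_normal_lo_rtranclp)

end
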